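(* For every integer $d\ge2$ and every $q\ne0$ there exists $\Lambda_0=\Lambda_0(q,d)>0$ with the following property. Let $(X,Y,Z,W)$ be a solution of system (S) on $(-\infty,t_{max})$ satisfying: (i) $Y,W>0$; (ii) $\lim_{t\to-\infty}(X,Y,Z,W)(t)=(0,0,1,0)$; (iii) $\mathcal C>0$; (iv) $\lim_{t\to-\infty}W/Y^2=1$; (v) $\mathcal C\lambda^2\ge\Lambda_0$, where $g$ is normalized with $\lambda=\lim_{t\to-\infty}g(t)>0$. Then $$\frac{W(t)^2}{Y(t)^2}\le\frac{A_2}{A_3(d+2)}\qquad\text{for all }t\in(-\infty,t_{max}).$$
   Context: Put $A_2=d(d+2)$ and $A_3=\tfrac14d(d+2)^2q^2$. System (S) is $$X'=X(dX^2+Z^2-1)+\tfrac{A_2}{d}Y^2-2\tfrac{A_3}{d}W^2,\qquad Y'=Y(dX^2+Z^2-X),$$ $$Z'=Z(dX^2+Z^2-1)+A_3W^2,\qquad W'=W(dX^2+Z^2-2X+Z).$$ $g$ is a positive solution of $g'=gX$, and $\mathcal L=gY$. The first integral is $dX^2+A_2Y^2+Z^2-A_3W^2=1-\mathcal C\mathcal L^2$ with $\mathcal C$ constant. Under (i)–(iii), $\lambda=\lim_{t\to-\infty}g(t)$ exists, and fixing it fixes $g$ and hence $\mathcal C$; the product $\mathcal C\lambda^2$ is independent of this choice. *)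

theory Defs
  imports "HOL-Analysis.Analysis" "HOL-Library.Extended_Real"
begin

definition A2 :: "nat \<Rightarrow> real" where
  "A2 d = real d * (real d + 2)"

definition A3 :: "nat \<Rightarrow> real \<Rightarrow> real" where
  "A3 d q = (1/4) * real d * (real d + 2)^2 * q^2"

definition solves_S :: "nat \<Rightarrow> real \<Rightarrow> real set \<Rightarrow>
    (real \<Rightarrow> real) \<Rightarrow> (real \<Rightarrow> real) \<Rightarrow> (real \<Rightarrow> real) \<Rightarrow> (real \<Rightarrow> real) \<Rightarrow> bool" where
  "solves_S d q I X Y Z W \<longleftrightarrow> (\<forall>t\<in>I.
     (X has_real_derivative
        (X t * (real d * (X t)^2 + (Z t)^2 - 1) + A2 d / real d * (Y t)^2
         - 2 * A3 d q / real d * (W t)^2)) (at t) \<and>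
     (Y has_real_derivative (Y t * (real d * (X t)^2 + (Z t)^2 - X t))) (at t) \<and>
     (Z has_real_derivative (Z t * (real d * (X t)^2 + (Z t)^2 - 1) + A3 d q * (W t)^2)) (at t) \<and>
     (W has_real_derivative (W t * (real d * (X t)^2 + (Z t)^2 - 2 * X t + Z t))) (at t))"

end

theory Submission
  imports Defs
begin

text \<open>
  Let \<open>A = A\<^sub>3(d,q)\<close>; the claim is \<open>A W\<^sup>2 \<le> d Y\<^sup>2\<close>. Near \<open>-\<infinity>\<close> one has
  \<open>W\<^sup>2/Y\<^sup>2 \<sim> Y\<^sup>2 \<rightarrow> 0\<close>, so the claim can only fail after a first time \<open>t\<^sub>1\<close> with
  \<open>A W\<^sup>2 = 3/4 d Y\<^sup>2\<close>. Up to \<open>t\<^sub>1\<close> the first integral confines \<open>(X,Z)\<close> to the ellipse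
  \<open>d X\<^sup>2 + Z\<^sup>2 \<le> 1\<close> and bounds \<open>C (gY)\<^sup>2 \<le> 1\<close>; moreover \<open>X > 0\<close> there, and these facts make
  \<open>U = W e\<^bsup>Z-X\<^esup> / (g Y\<^sup>2)\<close> nonincreasing, so \<open>U \<le> e/\<lambda>\<close>. Hence
  \<open>W\<^sup>2 \<le> e\<^sup>6 Y\<^sup>2 / (C \<lambda>\<^sup>2)\<close>, which for \<open>C \<lambda>\<^sup>2\<close> large gives \<open>A W\<^sup>2 \<le> d/2 Y\<^sup>2\<close> at \<open>t\<^sub>1\<close>,
  a contradiction.
\<close>

lemma A2_div: "d \<noteq> 0 \<Longrightarrow> A2 d / real d = real d + 2"
  by (simp add: A2_def)

lemma A2_div_A3: "A2 d / (A3 d q * (real d + 2)) = real d / A3 d q"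
  by (simp add: A2_def)

lemma A3_pos: "d \<noteq> 0 \<Longrightarrow> q \<noteq> 0 \<Longrightarrow> A3 d q > 0"
  by (simp add: A3_def)

lemma gt_if_deriv_pos_below_at_bot:
  fixes f f' :: "real \<Rightarrow> real"
  assumes lim: "(f \<longlongrightarrow> l) at_bot" and "c \<le> l"
    and deriv: "\<And>s. s \<le> b \<Longrightarrow> (f has_real_derivative f' s) (at s)"
    and pos: "\<And>s. s \<le> b \<Longrightarrow> f s \<le> c \<Longrightarrow> f' s > 0"
  shows "f b > c"
proof (rule ccontr)
  assume "\<not> c < f b"
  then have fb: "f b \<le> c" by simp
  from DERIV_pos_inc_left[OF deriv[of b] pos[OF _ fb]] obtain \<delta> where
    "\<delta> > 0" and \<delta>: "\<And>h. 0 < h \<Longrightarrow> h < \<delta> \<Longrightarrow> f (b - h) < f b" by auto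
  define s1 where "s1 = b - \<delta>/2"
  have s1b: "s1 \<le> b" and fs1: "f s1 < f b"
    using \<open>\<delta> > 0\<close> \<delta> by (auto simp: s1_def)
  \<comment> \<open>a minimum of \<open>f\<close> on \<open>[s, s\<^sub>1]\<close> with value \<open>\<le> c\<close> can only sit at \<open>s\<close>, since \<open>f\<close> increases there\<close>
  have "f s \<le> f s1" if "s \<le> s1" for s
  proof (rule ccontr)
    assume "\<not> f s \<le> f s1"
    have cont: "continuous_on {s..s1} f"
      by (intro continuous_at_imp_continuous_on ballI)
        (meson DERIV_isCont atLeastAtMost_iff deriv order_trans s1b)
    then obtain m where m: "m \<in> {s..s1}" and min: "\<And>y. y \<in> {s..s1} \<Longrightarrow> f m \<le> f y"
      using continuous_attains_inf[OF compact_Icc _ cont] \<open>s \<le> s1\<close> by auto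
    have "f m \<le> f s1" using min \<open>s \<le> s1\<close> by auto
    then have fm: "f m \<le> c" using fs1 fb by linarith
    have mb: "m \<le> b" using m s1b by auto
    have "m \<noteq> s" using \<open>f m \<le> f s1\<close> \<open>\<not> f s \<le> f s1\<close> by auto
    then have "s < m" using m by auto
    from DERIV_pos_inc_left[OF deriv[OF mb] pos[OF mb fm]] obtain e where
      "e > 0" and e: "\<And>h. 0 < h \<Longrightarrow> h < e \<Longrightarrow> f (m - h) < f m" by auto
    define h where "h = min (e/2) (m - s)"
    have "0 < h" "h < e" using \<open>e > 0\<close> \<open>s < m\<close> by (auto simp: h_def)
    then have "f (m - h) < f m" by (rule e)
    moreover have "m - h \<in> {s..s1}" using m \<open>0 < h\<close> by (auto simp: h_def)
    ultimately show False using min by fastforce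
  qed
  then have "l \<le> f s1"
    by (intro tendsto_upperbound[OF lim]) (auto simp: eventually_at_bot_linorder)
  then show False using fs1 fb \<open>c \<le> l\<close> by linarith
qed

lemma first_zero_before:
  fixes \<phi> :: "real \<Rightarrow> real"
  assumes cont: "continuous_on {..t} \<phi>" and neg: "eventually (\<lambda>s. \<phi> s < 0) at_bot"
    and "\<phi> t > 0"
  shows "\<exists>t1 \<le> t. \<phi> t1 = 0 \<and> (\<forall>s \<le> t1. \<phi> s \<le> 0)"
proof -
  obtain T where T: "\<And>s. s \<le> T \<Longrightarrow> \<phi> s < 0"
    using neg by (auto simp: eventually_at_bot_linorder)
  define T' where "T' = min T t"
  have neg': "\<phi> s < 0" if "s \<le> T'" for s using T that by (simp add: T'_def)
  have zero_between: "\<exists>z. T' \<le> z \<and> z \<le> s \<and> \<phi> z = 0" if "s \<le> t" "\<phi> s \<ge> 0" for s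
  proof -
    have "T' \<le> s" using neg'[of s] that by linarith
    moreover have "continuous_on {T'..s} \<phi>" by (rule continuous_on_subset[OF cont]) (use that in auto)
    ultimately show ?thesis using IVT'[of \<phi> T' 0 s] neg'[of T'] that by auto
  qed
  define S where "S = {s \<in> {T'..t}. \<phi> s = 0}"
  have "S \<noteq> {}" using zero_between[of t] \<open>\<phi> t > 0\<close> by (auto simp: S_def)
  moreover have "bdd_below S" by (auto simp: S_def bdd_below_def)
  moreover have "continuous_on {T'..t} \<phi>" by (rule continuous_on_subset[OF cont]) auto
  then have "closed S" unfolding S_def by (rule continuous_closed_preimage_constant) simp
  ultimately have "Inf S \<in> S" by (rule closed_contains_Inf)
  then have "Inf S \<le> t" "\<phi> (Inf S) = 0" by (simp_all add: S_def)
  moreover have "\<phi> s \<le> 0" if s_le: "s \<le> Inf S" for s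
  proof (rule ccontr)
    assume "\<not> \<phi> s \<le> 0"
    moreover have "s \<le> t" using s_le \<open>Inf S \<le> t\<close> by linarith
    ultimately obtain z where z: "T' \<le> z" "z \<le> s" "\<phi> z = 0"
      using zero_between by force
    then have "z \<in> S" using \<open>s \<le> t\<close> by (simp add: S_def)
    then have "Inf S \<le> z" using \<open>bdd_below S\<close> by (rule cInf_lower)
    then have "z = s" using z(2) s_le by linarith
    then show False using z(3) \<open>\<not> \<phi> s \<le> 0\<close> by simp
  qed
  ultimately show ?thesis by blast
qed

lemma DERIV_log_combination:
  fixes W Y Z X g :: "real \<Rightarrow> real"
  assumes "(W has_real_derivative W t * a) (at t)" "(Y has_real_derivative Y t * b) (at t)"
    "(Z has_real_derivative c) (at t)" "(X has_real_derivative e) (at t)"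
    "(g has_real_derivative g t * f) (at t)" and "Y t \<noteq> 0" "g t \<noteq> 0"
  shows "((\<lambda>s. W s / (Y s)^2 * exp (Z s - X s) / g s) has_real_derivative
      W t / (Y t)^2 * exp (Z t - X t) / g t * (a - 2 * b + c - e - f)) (at t)"
  using assms by (auto intro!: derivative_eq_intros simp: field_simps power2_eq_square)

locale S_orbit =
  fixes d :: nat and q :: real and I :: "real set"
    and X Y Z W g :: "real \<Rightarrow> real" and C lam :: real
  assumes d_ge_2: "d \<ge> 2" and q_nonzero: "q \<noteq> 0"
    and I_down_closed: "\<And>s t. t \<in> I \<Longrightarrow> s \<le> t \<Longrightarrow> s \<in> I"
    and solves: "solves_S d q I X Y Z W"
    and g_pos: "\<And>t. t \<in> I \<Longrightarrow> g t > 0"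
    and g_deriv: "\<And>t. t \<in> I \<Longrightarrow> (g has_real_derivative g t * X t) (at t)"
    and first_integral: "\<And>t. t \<in> I \<Longrightarrow>
      real d * (X t)^2 + A2 d * (Y t)^2 + (Z t)^2 - A3 d q * (W t)^2 = 1 - C * (g t * Y t)^2"
    and Y_pos: "\<And>t. t \<in> I \<Longrightarrow> Y t > 0" and W_pos: "\<And>t. t \<in> I \<Longrightarrow> W t > 0"
    and X_lim: "(X \<longlongrightarrow> 0) at_bot" and Y_lim: "(Y \<longlongrightarrow> 0) at_bot"
    and Z_lim: "(Z \<longlongrightarrow> 1) at_bot"
    and ratio_lim: "((\<lambda>t. W t / (Y t)^2) \<longlongrightarrow> 1) at_bot"
    and g_lim: "(g \<longlongrightarrow> lam) at_bot" and lam_pos: "lam > 0" and C_pos: "C > 0"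
begin

abbreviation "A \<equiv> A3 d q"

lemma A_pos: "A > 0"
  using A3_pos d_ge_2 q_nonzero by simp

lemma
  assumes "t \<in> I"
  shows X_deriv: "(X has_real_derivative X t * (d * (X t)^2 + (Z t)^2 - 1)
      + (real d + 2) * (Y t)^2 - 2 * A / d * (W t)^2) (at t)"
    and Y_deriv: "(Y has_real_derivative Y t * (d * (X t)^2 + (Z t)^2 - X t)) (at t)"
    and Z_deriv: "(Z has_real_derivative Z t * (d * (X t)^2 + (Z t)^2 - 1) + A * (W t)^2) (at t)"
    and W_deriv: "(W has_real_derivative W t * (d * (X t)^2 + (Z t)^2 - 2 * X t + Z t)) (at t)"
  using solves assms A2_div[of d] d_ge_2 unfolding solves_S_def by auto

lemma continuous_on_below:
  assumes "t \<in> I" and "\<And>s. s \<in> I \<Longrightarrow> (f has_real_derivative f' s) (at s)"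
  shows "continuous_on {..t} f"
  using assms I_down_closed by (intro continuous_at_imp_continuous_on ballI DERIV_isCont) auto

lemma
  assumes "t \<in> I" and "A * (W t)^2 \<le> d * (Y t)^2"
  shows ellipse_bound: "d * (X t)^2 + (Z t)^2 \<le> 1"
    and gY_bound: "C * (g t * Y t)^2 \<le> 1"
proof -
  have "real d * (real d + 2) * (Y t)^2 \<ge> d * (Y t)^2"
    using d_ge_2 by (simp add: mult_right_mono)
  then have "d * (X t)^2 + (Z t)^2 + C * (g t * Y t)^2 \<le> 1"
    using first_integral[OF assms(1)] assms(2) unfolding A2_def by linarith
  moreover have "d * (X t)^2 \<ge> 0" "(Z t)^2 \<ge> 0" "C * (g t * Y t)^2 \<ge> 0"
    using C_pos by auto
  ultimately show "d * (X t)^2 + (Z t)^2 \<le> 1" "C * (g t * Y t)^2 \<le> 1"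
    by linarith+
qed

lemma
  assumes "t \<in> I" and "A * (W t)^2 \<le> d * (Y t)^2"
  shows X_bound: "\<bar>X t\<bar> \<le> 1" and Z_bound: "\<bar>Z t\<bar> \<le> 1"
proof -
  have "(X t)^2 \<le> d * (X t)^2" using d_ge_2 mult_right_mono[of 1 "real d" "(X t)^2"] by simp
  moreover have "(X t)^2 \<ge> 0" "(Z t)^2 \<ge> 0" by simp_all
  ultimately have "(X t)^2 \<le> 1" "(Z t)^2 \<le> 1"
    using ellipse_bound[OF assms] by linarith+
  then show "\<bar>X t\<bar> \<le> 1" "\<bar>Z t\<bar> \<le> 1" by (simp_all add: abs_square_le_1)
qed

lemma X_pos_below:
  assumes "b \<in> I" and below: "\<And>s. s \<le> b \<Longrightarrow> A * (W s)^2 \<le> d * (Y s)^2"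
  shows "X b > 0"
proof (rule gt_if_deriv_pos_below_at_bot[OF X_lim order_refl])
  fix s assume "s \<le> b"
  then have "s \<in> I" using assms I_down_closed by blast
  then show "(X has_real_derivative X s * (d * (X s)^2 + (Z s)^2 - 1)
      + (real d + 2) * (Y s)^2 - 2 * A / d * (W s)^2) (at s)" by (rule X_deriv)
  assume "X s \<le> 0"
  then have "X s * (d * (X s)^2 + (Z s)^2 - 1) \<ge> 0"
    using ellipse_bound[OF \<open>s \<in> I\<close> below[OF \<open>s \<le> b\<close>]] by (simp add: mult_nonpos_nonpos)
  moreover have "2 * A / d * (W s)^2 \<le> 2 * (Y s)^2"
    using below[OF \<open>s \<le> b\<close>] d_ge_2 by (simp add: field_simps)
  moreover have "d * (Y s)^2 > 0" using Y_pos[OF \<open>s \<in> I\<close>] d_ge_2 by simp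
  moreover have "(real d + 2) * (Y s)^2 = d * (Y s)^2 + 2 * (Y s)^2"
    by (simp add: algebra_simps)
  ultimately show "0 < X s * (d * (X s)^2 + (Z s)^2 - 1)
      + (real d + 2) * (Y s)^2 - 2 * A / d * (W s)^2"
    by linarith
qed

definition U :: "real \<Rightarrow> real" where
  "U t = W t / (Y t)^2 * exp (Z t - X t) / g t"

lemma U_deriv:
  assumes "t \<in> I"
  shows "(U has_real_derivative U t * ((d * (X t)^2 + (Z t)^2) * (Z t - X t - 1)
      + (real d + 2) / d * (A * (W t)^2 - d * (Y t)^2))) (at t)"
proof -
  let ?S = "d * (X t)^2 + (Z t)^2"
  have "(?S - 2 * X t + Z t) - 2 * (?S - X t) + (Z t * (?S - 1) + A * (W t)^2)
      - (X t * (?S - 1) + (real d + 2) * (Y t)^2 - 2 * A / d * (W t)^2) - X t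
      = ?S * (Z t - X t - 1) + (real d + 2) / d * (A * (W t)^2 - d * (Y t)^2)"
    using d_ge_2 by (simp add: field_simps)
  then show ?thesis
    using DERIV_log_combination[OF W_deriv[OF assms] Y_deriv[OF assms] Z_deriv[OF assms]
        X_deriv[OF assms] g_deriv[OF assms]] g_pos[OF assms] Y_pos[OF assms]
    by (simp add: U_def[abs_def])
qed

lemma U_le_below:
  assumes "b \<in> I" and below: "\<And>s. s \<le> b \<Longrightarrow> A * (W s)^2 \<le> d * (Y s)^2"
  shows "U b \<le> exp 1 / lam"
proof -
  have mono: "U b \<le> U s" if "s \<le> b" for s
  proof (rule DERIV_nonpos_imp_nonincreasing[OF that])
    fix x assume x: "s \<le> x" "x \<le> b"
    then have "x \<in> I" using assms I_down_closed by blast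
    have "Z x - X x - 1 \<le> 0"
      using Z_bound[OF \<open>x \<in> I\<close> below] X_pos_below[OF \<open>x \<in> I\<close> below] x by force
    then have "(d * (X x)^2 + (Z x)^2) * (Z x - X x - 1) \<le> 0"
      by (simp add: mult_nonneg_nonpos)
    moreover have "(real d + 2) / d * (A * (W x)^2 - d * (Y x)^2) \<le> 0"
      using below x by (intro mult_nonneg_nonpos) auto
    moreover have "U x > 0"
      unfolding U_def using g_pos[OF \<open>x \<in> I\<close>] Y_pos[OF \<open>x \<in> I\<close>] W_pos[OF \<open>x \<in> I\<close>] by simp
    ultimately have "U x * ((d * (X x)^2 + (Z x)^2) * (Z x - X x - 1)
        + (real d + 2) / d * (A * (W x)^2 - d * (Y x)^2)) \<le> 0"
      by (simp add: mult_nonneg_nonpos)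
    then show "\<exists>y. (U has_real_derivative y) (at x) \<and> y \<le> 0"
      using U_deriv[OF \<open>x \<in> I\<close>] by blast
  qed
  have "(U \<longlongrightarrow> 1 * exp (1 - 0) / lam) at_bot"
    unfolding U_def using lam_pos by (intro tendsto_intros ratio_lim Z_lim X_lim g_lim) auto
  then have "(U \<longlongrightarrow> exp 1 / lam) at_bot" by simp
  then show ?thesis
    by (rule tendsto_lowerbound) (auto simp: eventually_at_bot_linorder intro!: exI[of _ b] mono)
qed

lemma W_sq_le_below:
  assumes "b \<in> I" and below: "\<And>s. s \<le> b \<Longrightarrow> A * (W s)^2 \<le> d * (Y s)^2"
  shows "(W b)^2 \<le> exp 6 / (C * lam^2) * (Y b)^2"
proof -
  have below_b: "A * (W b)^2 \<le> d * (Y b)^2" using below by simp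
  define r where "r = W b / (g b * (Y b)^2)"
  have "r = U b * exp (X b - Z b)"
    unfolding r_def U_def using g_pos[OF \<open>b \<in> I\<close>] Y_pos[OF \<open>b \<in> I\<close>]
    by (simp add: exp_diff field_simps)
  also have "\<dots> \<le> exp 1 / lam * exp 2"
    using U_le_below[OF assms] X_bound[OF \<open>b \<in> I\<close> below_b] Z_bound[OF \<open>b \<in> I\<close> below_b] lam_pos
      g_pos Y_pos W_pos \<open>b \<in> I\<close>
    by (intro mult_mono) (auto simp: U_def)
  also have "\<dots> = exp 3 / lam" by (simp add: exp_add[symmetric])
  finally have "r^2 \<le> (exp 3 / lam)^2"
    using g_pos[OF \<open>b \<in> I\<close>] Y_pos[OF \<open>b \<in> I\<close>] W_pos[OF \<open>b \<in> I\<close>]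
    by (intro power_mono) (auto simp: r_def)
  moreover have "(g b * Y b)^2 \<le> 1 / C"
    using gY_bound[OF \<open>b \<in> I\<close> below_b] C_pos by (simp add: field_simps)
  ultimately have "r^2 * (g b * Y b)^2 \<le> (exp 3 / lam)^2 * (1 / C)"
    by (rule mult_mono) simp_all
  also have "\<dots> = exp 6 / (C * lam^2)"
    by (simp add: power2_eq_square flip: exp_add)
  finally have "r^2 * (g b * Y b)^2 * (Y b)^2 \<le> exp 6 / (C * lam^2) * (Y b)^2"
    by (rule mult_right_mono) simp
  moreover have "(W b)^2 = r^2 * (g b * Y b)^2 * (Y b)^2"
    unfolding r_def using g_pos[OF \<open>b \<in> I\<close>] Y_pos[OF \<open>b \<in> I\<close>]
    by (simp add: field_simps power2_eq_square)
  ultimately show ?thesis by simp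
qed

lemma A_W_sq_eventually_less:
  assumes "c > 0"
  shows "eventually (\<lambda>s. A * (W s)^2 < c * (Y s)^2) at_bot"
proof -
  have "((\<lambda>s. (W s / (Y s)^2)^2 * (Y s)^2) \<longlongrightarrow> 1^2 * 0^2) at_bot"
    by (intro tendsto_intros ratio_lim Y_lim)
  then have "eventually (\<lambda>s. (W s / (Y s)^2)^2 * (Y s)^2 < c / A) at_bot"
    using assms A_pos by (intro order_tendstoD(2)) auto
  moreover have "eventually (\<lambda>s. W s / (Y s)^2 > 0) at_bot"
    by (rule order_tendstoD(1)[OF ratio_lim]) simp
  ultimately show ?thesis
  proof eventually_elim
    case (elim s)
    then have "Y s \<noteq> 0" by auto
    then have "A * ((W s / (Y s)^2)^2 * (Y s)^2) * (Y s)^2 < A * (c / A) * (Y s)^2"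
      using elim(1) A_pos by (intro mult_strict_right_mono mult_strict_left_mono) auto
    then show ?case
      using \<open>Y s \<noteq> 0\<close> A_pos by (simp add: field_simps power2_eq_square)
  qed
qed

lemma A_W_sq_le_half_below:
  assumes large: "C * lam^2 \<ge> 2 * exp 6 * A / d"
    and "b \<in> I" and below: "\<And>s. s \<le> b \<Longrightarrow> A * (W s)^2 \<le> d * (Y s)^2"
  shows "A * (W b)^2 \<le> d / 2 * (Y b)^2"
proof -
  have "(W b)^2 \<le> exp 6 / (C * lam^2) * (Y b)^2"
    using \<open>b \<in> I\<close> below by (rule W_sq_le_below)
  then have "A * (W b)^2 \<le> A * (exp 6 / (C * lam^2) * (Y b)^2)"
    by (rule mult_left_mono) (use A_pos in simp)
  also have "\<dots> \<le> A * (exp 6 / (2 * exp 6 * A / d) * (Y b)^2)"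
    using large A_pos C_pos lam_pos d_ge_2
    by (intro mult_right_mono mult_left_mono divide_left_mono) auto
  also have "\<dots> = d / 2 * (Y b)^2" using A_pos by simp
  finally show ?thesis .
qed

lemma A_W_sq_le:
  assumes large: "C * lam^2 \<ge> 2 * exp 6 * A / d" and "t \<in> I"
  shows "A * (W t)^2 \<le> d * (Y t)^2"
proof (rule ccontr)
  assume bad: "\<not> A * (W t)^2 \<le> d * (Y t)^2"
  define \<phi> where "\<phi> s = A * (W s)^2 - 3/4 * d * (Y s)^2" for s
  have "continuous_on {..t} \<phi>" unfolding \<phi>_def
    by (intro continuous_intros continuous_on_below[OF \<open>t \<in> I\<close> W_deriv]
        continuous_on_below[OF \<open>t \<in> I\<close> Y_deriv])
  moreover have "eventually (\<lambda>s. \<phi> s < 0) at_bot"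
    using A_W_sq_eventually_less[of "3/4 * d"] d_ge_2 by (simp add: \<phi>_def)
  moreover have "\<phi> t > 0"
  proof -
    have "d * (Y t)^2 > 0" using Y_pos[OF \<open>t \<in> I\<close>] d_ge_2 by simp
    then show ?thesis using bad by (simp add: \<phi>_def)
  qed
  ultimately obtain t1 where "t1 \<le> t" "\<phi> t1 = 0" and nonpos: "\<And>s. s \<le> t1 \<Longrightarrow> \<phi> s \<le> 0"
    using first_zero_before by blast
  have "t1 \<in> I" using I_down_closed \<open>t \<in> I\<close> \<open>t1 \<le> t\<close> by blast
  have "A * (W s)^2 \<le> d * (Y s)^2" if "s \<le> t1" for s
  proof -
    have "d * (Y s)^2 \<ge> 0" by simp
    then show ?thesis using nonpos[OF that] unfolding \<phi>_def by linarith
  qed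
  then have "A * (W t1)^2 \<le> d / 2 * (Y t1)^2"
    by (rule A_W_sq_le_half_below[OF large \<open>t1 \<in> I\<close>])
  moreover have "d * (Y t1)^2 > 0" using Y_pos[OF \<open>t1 \<in> I\<close>] d_ge_2 by simp
  ultimately show False using \<open>\<phi> t1 = 0\<close> by (simp add: \<phi>_def)
qed

lemma W_sq_div_Y_sq_le:
  assumes "C * lam^2 \<ge> 2 * exp 6 * A / d" and "t \<in> I"
  shows "(W t)^2 / (Y t)^2 \<le> A2 d / (A3 d q * (real d + 2))"
  using A_W_sq_le[OF assms] Y_pos[OF \<open>t \<in> I\<close>] A_pos
  by (simp add: A2_div_A3 divide_le_eq le_divide_eq mult.commute)

end

theorem theorem5p3:
  fixes d :: nat and q :: real
  assumes "d \<ge> 2" and "q \<noteq> 0"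
  shows "\<exists>Lam0 :: real. Lam0 > 0 \<and>
    (\<forall>(tmax :: ereal) (X :: real \<Rightarrow> real) (Y :: real \<Rightarrow> real) (Z :: real \<Rightarrow> real)
       (W :: real \<Rightarrow> real) (g :: real \<Rightarrow> real) (C :: real) (lam :: real).
       solves_S d q {t. ereal t < tmax} X Y Z W
       \<and> (\<forall>t\<in>{t. ereal t < tmax}. g t > 0 \<and> (g has_real_derivative (g t * X t)) (at t))
       \<and> (\<forall>t\<in>{t. ereal t < tmax}.
             real d * (X t)^2 + A2 d * (Y t)^2 + (Z t)^2 - A3 d q * (W t)^2
               = 1 - C * (g t * Y t)^2)
       \<and> (\<forall>t\<in>{t. ereal t < tmax}. Y t > 0 \<and> W t > 0)
       \<and> (X \<longlongrightarrow> 0) at_bot \<and> (Y \<longlongrightarrow> 0) at_bot \<and> (Z \<longlongrightarrow> 1) at_bot \<and> (W \<longlongrightarrow> 0) at_bot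
       \<and> C > 0
       \<and> ((\<lambda>t. W t / (Y t)^2) \<longlongrightarrow> 1) at_bot
       \<and> (g \<longlongrightarrow> lam) at_bot \<and> lam > 0
       \<and> C * lam^2 \<ge> Lam0
       \<longrightarrow> (\<forall>t\<in>{t. ereal t < tmax}. (W t)^2 / (Y t)^2 \<le> A2 d / (A3 d q * (real d + 2))))"
  apply (intro exI[of _ "2 * exp 6 * A3 d q / real d"] conjI allI impI ballI; (elim conjE)?)
  subgoal using assms A3_pos by simp
  subgoal premises H for tmax X Y Z W g C lam t
  proof -
    interpret S_orbit d q "{t. ereal t < tmax}" X Y Z W g C lam
      using assms H by unfold_locales (auto intro: le_less_trans[OF ereal_less_eq(3)[THEN iffD2]])
    show ?thesis using H by (intro W_sq_div_Y_sq_le) auto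
  qed
  done

end
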